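(* Let $f\in K$ have degree $n$. Then $f$ is quasi-symmetric if and only if $A_{\mathbf a^{(k)}}f=f$ for all $1\le k\le n$.
   Context: $K$ is the ring of integer formal power series of bounded degree in $x_1,x_2,\dots$. $f$ is quasi-symmetric if the coefficient of $x_{i_1}^{a_1}\cdots x_{i_k}^{a_k}$ equals that of $x_{j_1}^{a_1}\cdots x_{j_k}^{a_k}$ whenever $i_1<\dots<i_k$ and $j_1<\dots<j_k$. For a strictly increasing sequence $\mathbf a=(1\le a_1<a_2<\cdots)$ of positive integers, $A_{\mathbf a}:K\to K$ is the algebra homomorphism $A_{\mathbf a}f=f(0,\dots,0,x_1,0,\dots,0,x_2,0,\dots)$ with $x_i$ placed in position $a_i$ (i.e. substitute $x_{a_i}\mapsto x_i$ and all other variables $\mapsto0$). For an integer $k\ge1$, $\mathbf a^{(k)}$ is the sequence with $a^{(k)}(i)=i$ for $i<k$ and $a^{(k)}(i)=i+1$ for $i\ge k$. *)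

theory Defs
  imports Main
begin

text \<open>Monomials in the variables x_1, x_2, ... are exponent vectors
  m :: nat \<Rightarrow> nat (m i = exponent of x_i) with finite support and m 0 = 0
  (there is no variable x_0). A formal power series is its coefficient
  function (nat \<Rightarrow> nat) \<Rightarrow> int, vanishing outside valid monomials.\<close>

definition valid_mono :: "(nat \<Rightarrow> nat) \<Rightarrow> bool" where
  "valid_mono m \<longleftrightarrow> m 0 = 0 \<and> finite {i. m i \<noteq> 0}"

definition tdeg :: "(nat \<Rightarrow> nat) \<Rightarrow> nat" where
  "tdeg m = sum m {i. m i \<noteq> 0}"

definition inK :: "((nat \<Rightarrow> nat) \<Rightarrow> int) \<Rightarrow> bool" where
  "inK f \<longleftrightarrow> (\<forall>m. f m \<noteq> 0 \<longrightarrow> valid_mono m) \<and> (\<exists>d. \<forall>m. f m \<noteq> 0 \<longrightarrow> tdeg m \<le> d)"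

definition series_degree :: "((nat \<Rightarrow> nat) \<Rightarrow> int) \<Rightarrow> nat" where
  "series_degree f = (if {m. f m \<noteq> 0} = {} then 0 else Max (tdeg ` {m. f m \<noteq> 0}))"

definition mono_of :: "nat list \<Rightarrow> nat list \<Rightarrow> (nat \<Rightarrow> nat)" where
  "mono_of is al = (\<lambda>v. \<Sum>t<length is. if is ! t = v then al ! t else 0)"

definition quasi_symmetric :: "((nat \<Rightarrow> nat) \<Rightarrow> int) \<Rightarrow> bool" where
  "quasi_symmetric f \<longleftrightarrow>
     (\<forall>al is js. length is = length al \<and> length js = length al \<and> (\<forall>e\<in>set al. 0 < e)
        \<and> sorted_wrt (<) is \<and> sorted_wrt (<) js
        \<and> (\<forall>i\<in>set is. 1 \<le> i) \<and> (\<forall>j\<in>set js. 1 \<le> j)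
        \<longrightarrow> f (mono_of is al) = f (mono_of js al))"

text \<open>A_a f = f(...,x_i in position a_i,...): the coefficient of x^m in A_a f is the
  coefficient in f of the monomial with exponent m_i at x_{a_i} and 0 elsewhere.\<close>
definition subst_A :: "(nat \<Rightarrow> nat) \<Rightarrow> ((nat \<Rightarrow> nat) \<Rightarrow> int) \<Rightarrow> ((nat \<Rightarrow> nat) \<Rightarrow> int)" where
  "subst_A a f = (\<lambda>m. if valid_mono m then
       f (\<lambda>j. if \<exists>i\<ge>1. a i = j then m (THE i. 1 \<le> i \<and> a i = j) else 0)
     else 0)"

definition seq_k :: "nat \<Rightarrow> nat \<Rightarrow> nat" where
  "seq_k k i = (if i < k then i else i + 1)"

end

theory Submission
  imports Defs
begin

text \<open>The coefficient of x^m in A_a(k) f is the coefficient of f at the monomial obtained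
  from x^m by moving every variable x_j with j \<ge> k to x_(j+1), so A_a(k) f = f says that
  opening an empty slot at position k does not change coefficients. Quasi-symmetry gives this
  for every k. Conversely, a strictly increasing index list i_1 < ... < i_r other than 1, ..., r
  misses some k \<le> r below its largest entry; closing that gap is an inverse shift at k and
  lowers i_1 + ... + i_r, so induction moves every monomial with r \<le> n variables to indices
  1, ..., r without changing its coefficient. Monomials in more than n variables have degree
  above n, so their coefficients vanish.\<close>

(* Left inverse of seq_k k off the point k, which is not in its range. *)
definition seq_k_inv :: "nat \<Rightarrow> nat \<Rightarrow> nat" where
  "seq_k_inv k j = (if j < k then j else j - 1)"

lemma seq_k_eq_iff: "seq_k k i = j \<longleftrightarrow> j \<noteq> k \<and> i = seq_k_inv k j"
  by (auto simp: seq_k_def seq_k_inv_def)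

lemma seq_k_seq_k_inv: "j \<noteq> k \<Longrightarrow> seq_k k (seq_k_inv k j) = j"
  by (simp add: seq_k_eq_iff)

lemma strict_mono_seq_k: "strict_mono (seq_k k)"
  by (auto simp: strict_mono_def seq_k_def)

lemma seq_k_inv_less_iff: "i \<noteq> k \<Longrightarrow> j \<noteq> k \<Longrightarrow> seq_k_inv k i < seq_k_inv k j \<longleftrightarrow> i < j"
  by (auto simp: seq_k_inv_def)

lemma seq_k_inv_le: "seq_k_inv k i \<le> i"
  by (simp add: seq_k_inv_def)

lemma seq_k_inv_less: "k < i \<Longrightarrow> seq_k_inv k i < i"
  by (simp add: seq_k_inv_def)

(* The exponent vector of x^m under the substitution x_j \<mapsto> x_(seq_k k j). *)
definition shift_mono :: "nat \<Rightarrow> (nat \<Rightarrow> nat) \<Rightarrow> (nat \<Rightarrow> nat)" where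
  "shift_mono k m = (\<lambda>j. if j = k then 0 else m (seq_k_inv k j))"

lemma subst_A_seq_k:
  assumes "1 \<le> k"
  shows "subst_A (seq_k k) f m = (if valid_mono m then f (shift_mono k m) else 0)"
proof -
  have "(\<lambda>j. if \<exists>i\<ge>1. seq_k k i = j then m (THE i. 1 \<le> i \<and> seq_k k i = j) else 0)
      = shift_mono k m" if "m 0 = 0"
  proof
    fix j
    show "(if \<exists>i\<ge>1. seq_k k i = j then m (THE i. 1 \<le> i \<and> seq_k k i = j) else 0)
        = shift_mono k m j"
    proof (cases "j = 0 \<or> j = k")
      case True
      then show ?thesis
        using \<open>m 0 = 0\<close> assms by (auto simp: seq_k_def shift_mono_def seq_k_inv_def)
    next
      case False
      then have "1 \<le> seq_k_inv k j"
        using assms by (auto simp: seq_k_inv_def)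
      then have "(THE i. 1 \<le> i \<and> seq_k k i = j) = seq_k_inv k j"
        using False by (intro the_equality) (auto simp: seq_k_eq_iff)
      then show ?thesis
        using False \<open>1 \<le> seq_k_inv k j\<close> seq_k_seq_k_inv by (auto simp: shift_mono_def)
    qed
  qed
  then show ?thesis
    by (simp add: subst_A_def valid_mono_def)
qed

lemma subst_A_seq_k_eq_iff:
  assumes "inK f" "1 \<le> k"
  shows "subst_A (seq_k k) f = f \<longleftrightarrow> (\<forall>m. valid_mono m \<longrightarrow> f (shift_mono k m) = f m)"
  using assms by (auto simp: subst_A_seq_k fun_eq_iff inK_def)

lemma mono_of_nth:
  assumes "distinct is" "t < length is"
  shows "mono_of is al (is ! t) = al ! t"
proof -
  have "mono_of is al (is ! t) = (\<Sum>t'<length is. if t' = t then al ! t' else 0)"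
    unfolding mono_of_def using assms by (intro sum.cong) (auto simp: nth_eq_iff_index_eq)
  also have "\<dots> = al ! t"
    using assms by simp
  finally show ?thesis .
qed

lemma mono_of_notin: "v \<notin> set is \<Longrightarrow> mono_of is al v = 0"
  unfolding mono_of_def by (auto intro!: sum.neutral)

lemma mono_of_support: "{i. mono_of is al i \<noteq> 0} \<subseteq> set is"
  using mono_of_notin by fastforce

lemma map_mono_of: "distinct is \<Longrightarrow> length is = length al \<Longrightarrow> map (mono_of is al) is = al"
  by (rule nth_equalityI) (auto simp: mono_of_nth)

lemma mono_of_map:
  assumes "distinct is" "{i. m i \<noteq> 0} \<subseteq> set is"
  shows "mono_of is (map m is) = m"
proof
  fix v
  show "mono_of is (map m is) v = m v"
  proof (cases "v \<in> set is")
    case True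
    then obtain t where "t < length is" "v = is ! t"
      by (auto simp: in_set_conv_nth)
    then show ?thesis
      using mono_of_nth[OF assms(1)] by simp
  qed (use assms(2) mono_of_notin in auto)
qed

lemma valid_mono_mono_of:
  assumes "\<forall>i\<in>set is. 1 \<le> i"
  shows "valid_mono (mono_of is al)"
proof -
  have "mono_of is al 0 = 0"
    using assms by (intro mono_of_notin) auto
  moreover have "finite {i. mono_of is al i \<noteq> 0}"
    using finite_subset[OF mono_of_support finite_set] .
  ultimately show ?thesis
    by (simp add: valid_mono_def)
qed

lemma tdeg_mono_of:
  assumes "distinct is" "length is = length al"
  shows "tdeg (mono_of is al) = sum_list al"
proof -
  have "tdeg (mono_of is al) = sum (mono_of is al) (set is)"
    unfolding tdeg_def by (rule sum.mono_neutral_left[OF finite_set mono_of_support]) auto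
  also have "\<dots> = sum_list (map (mono_of is al) is)"
    using assms(1) by (simp add: sum_list_distinct_conv_sum_set)
  also have "\<dots> = sum_list al"
    using assms by (simp add: map_mono_of)
  finally show ?thesis .
qed

lemma shift_mono_mono_of: "shift_mono k (mono_of is al) = mono_of (map (seq_k k) is) al"
  unfolding shift_mono_def mono_of_def by (auto intro!: sum.cong simp: seq_k_eq_iff)

lemma tdeg_le_series_degree:
  assumes "inK f" "f m \<noteq> 0"
  shows "tdeg m \<le> series_degree f"
proof -
  obtain d where "\<forall>m. f m \<noteq> 0 \<longrightarrow> tdeg m \<le> d"
    using assms(1) unfolding inK_def by blast
  then have "tdeg ` {m. f m \<noteq> 0} \<subseteq> {..d}"
    by auto
  then have "finite (tdeg ` {m. f m \<noteq> 0})"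
    using finite_subset by blast
  moreover have "tdeg m \<in> tdeg ` {m. f m \<noteq> 0}"
    using assms(2) by simp
  ultimately show ?thesis
    unfolding series_degree_def by (auto intro: Max_ge)
qed

lemma mono_of_vanishes_above_degree:
  assumes "inK f" "distinct is" "length is = length al" "\<forall>e\<in>set al. 0 < e"
    and "series_degree f < length al"
  shows "f (mono_of is al) = 0"
proof (rule ccontr)
  assume "f (mono_of is al) \<noteq> 0"
  then have "sum_list al \<le> series_degree f"
    using tdeg_le_series_degree[OF assms(1)] tdeg_mono_of[OF assms(2,3)] by metis
  moreover have "length al \<le> sum_list al"
    using sum_list_mono[of al "\<lambda>_. 1" id] assms(4) by (simp add: Suc_le_eq sum_list_triv)
  ultimately show False
    using assms(5) by simp
qed

lemma sorted_wrt_less_gap: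
  fixes "is" :: "nat list"
  assumes "sorted_wrt (<) is" "\<forall>i\<in>set is. 1 \<le> i" "is \<noteq> [1..<length is + 1]"
  obtains k where "1 \<le> k" "k \<le> length is" "k \<notin> set is" "\<exists>i\<in>set is. k < i"
proof -
  have card_set: "card (set is) = length is"
    using assms(1) by (simp add: distinct_card strict_sorted_iff)
  have "\<exists>k\<in>{1..length is}. k \<notin> set is"
  proof (rule ccontr)
    assume "\<not> ?thesis"
    then have "{1..length is} = set is"
      using card_subset_eq[of "set is" "{1..length is}"] card_set by auto
    then have "set [1..<length is + 1] = set is"
      by (simp only: set_upt atLeastLessThanSuc_atLeastAtMost flip: Suc_eq_plus1)
    then have "[1..<length is + 1] = is"
      by (rule strict_sorted_equal[OF assms(1) sorted_wrt_upt])
    with assms(3) show False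
      by metis
  qed
  then obtain k where k: "1 \<le> k" "k \<le> length is" "k \<notin> set is"
    by auto
  have "\<exists>i\<in>set is. k < i"
  proof (rule ccontr)
    assume "\<not> ?thesis"
    then have "set is \<subseteq> {1..<k}"
      using assms(2) k(3) by (metis atLeastLessThan_iff linorder_neqE_nat subsetI)
    then have "length is \<le> k - 1"
      using card_mono[of "{1..<k}" "set is"] card_set by simp
    with k(1,2) show False by simp
  qed
  with k that show ?thesis by blast
qed

lemma sum_list_map_seq_k_inv_less:
  assumes "distinct is" "\<exists>i\<in>set is. k < i"
  shows "sum_list (map (seq_k_inv k) is) < sum_list is"
proof -
  have "sum_list (map (seq_k_inv k) is) = sum (seq_k_inv k) (set is)"
    using assms(1) by (simp add: sum_list_distinct_conv_sum_set)
  also have "\<dots> < \<Sum>(set is)"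
    using assms(2) seq_k_inv_less by (intro sum_strict_mono_ex1) (simp_all add: seq_k_inv_le, blast)
  also have "\<dots> = sum_list is"
    using assms(1) by (simp add: distinct_sum_list_conv_Sum)
  finally show ?thesis .
qed

lemma mono_of_eq_mono_of_upt_if_shift_invariant:
  assumes shift_inv: "\<And>k m. 1 \<le> k \<Longrightarrow> k \<le> n \<Longrightarrow> valid_mono m \<Longrightarrow> f (shift_mono k m) = f m"
    and "sorted_wrt (<) is" "\<forall>i\<in>set is. 1 \<le> i" "length is \<le> n"
  shows "f (mono_of is al) = f (mono_of [1..<length is + 1] al)"
  using assms(2-4)
proof (induction "sum_list is" arbitrary: "is" rule: less_induct)
  case less
  show ?case
  proof (cases "is = [1..<length is + 1]")
    case False
    then obtain k where k: "1 \<le> k" "k \<le> length is" "k \<notin> set is" "\<exists>i\<in>set is. k < i"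
      using sorted_wrt_less_gap less.prems(1,2) by blast
    define js where "js = map (seq_k_inv k) is"
    have is_eq: "is = map (seq_k k) js"
      unfolding js_def map_map using k(3)
      by (metis (mono_tags, lifting) comp_apply map_idI seq_k_seq_k_inv)
    have "sorted_wrt (<) js"
      unfolding js_def sorted_wrt_map
      by (rule sorted_wrt_mono_rel[OF _ less.prems(1)]) (metis k(3) seq_k_inv_less_iff)
    moreover have "\<forall>i\<in>set js. 1 \<le> i"
    proof
      fix j assume "j \<in> set js"
      then obtain i where "i \<in> set is" "j = seq_k_inv k i"
        by (auto simp: js_def)
      moreover from \<open>i \<in> set is\<close> have "1 \<le> i" "i \<noteq> k"
        using less.prems(2) k(3) by auto
      ultimately show "1 \<le> j"
        using k(1) by (auto simp: seq_k_inv_def)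
    qed
    moreover have "sum_list js < sum_list is"
      unfolding js_def using less.prems(1) k(4)
      by (intro sum_list_map_seq_k_inv_less) (simp_all add: strict_sorted_iff)
    moreover have "length js = length is"
      by (simp add: js_def)
    ultimately have "f (mono_of js al) = f (mono_of [1..<length is + 1] al)"
      using less.hyps less.prems(3) by metis
    moreover have "f (mono_of is al) = f (mono_of js al)"
      using shift_inv[OF k(1) _ valid_mono_mono_of] k(2) less.prems(3) \<open>\<forall>i\<in>set js. 1 \<le> i\<close>
      by (simp add: is_eq shift_mono_mono_of)
    ultimately show ?thesis
      by simp
  qed simp
qed

lemma quasi_symmetric_shift_mono:
  assumes "quasi_symmetric f" "valid_mono m"
  shows "f (shift_mono k m) = f m"
proof -
  define "is" where "is = sorted_list_of_set {i. m i \<noteq> 0}"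
  have supp: "set is = {i. m i \<noteq> 0}"
    using assms(2) by (simp add: is_def valid_mono_def)
  have "sorted_wrt (<) is" "distinct is"
    by (simp_all add: is_def)
  moreover have "\<forall>i\<in>set is. 1 \<le> i"
    using assms(2) supp by (auto simp: valid_mono_def Suc_le_eq intro: gr0I)
  moreover have "sorted_wrt (<) (map (seq_k k) is)"
    using \<open>sorted_wrt (<) is\<close> strict_mono_seq_k
    by (auto simp: sorted_wrt_map strict_mono_def elim!: sorted_wrt_mono_rel[rotated])
  moreover have "\<forall>i\<in>set (map (seq_k k) is). 1 \<le> i"
    using \<open>\<forall>i\<in>set is. 1 \<le> i\<close> by (auto simp: seq_k_def)
  moreover have "\<forall>e\<in>set (map m is). 0 < e"
    using supp by auto
  ultimately have "f (mono_of is (map m is)) = f (mono_of (map (seq_k k) is) (map m is))"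
    using assms(1) unfolding quasi_symmetric_def by (metis length_map)
  moreover have "mono_of is (map m is) = m"
    using \<open>distinct is\<close> supp by (simp add: mono_of_map)
  ultimately show ?thesis
    by (metis shift_mono_mono_of)
qed

lemma quasi_symmetric_if_shift_invariant:
  assumes "inK f"
    and shift_inv: "\<And>k m. 1 \<le> k \<Longrightarrow> k \<le> series_degree f \<Longrightarrow> valid_mono m \<Longrightarrow> f (shift_mono k m) = f m"
  shows "quasi_symmetric f"
  unfolding quasi_symmetric_def
proof (intro allI impI, elim conjE)
  fix al "is" js :: "nat list"
  assume len: "length is = length al" "length js = length al" and pos: "\<forall>e\<in>set al. 0 < e"
    and sorted: "sorted_wrt (<) is" "sorted_wrt (<) js"
    and ge1: "\<forall>i\<in>set is. 1 \<le> i" "\<forall>j\<in>set js. 1 \<le> j"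
  show "f (mono_of is al) = f (mono_of js al)"
  proof (cases "length al \<le> series_degree f")
    case True
    have "f (mono_of xs al) = f (mono_of [1..<length al + 1] al)"
      if "sorted_wrt (<) xs" "\<forall>i\<in>set xs. 1 \<le> i" "length xs = length al" for xs
    proof -
      have "f (mono_of xs al) = f (mono_of [1..<length xs + 1] al)"
        by (rule mono_of_eq_mono_of_upt_if_shift_invariant[OF shift_inv that(1,2)])
          (use that(3) True in simp_all)
      then show ?thesis
        by (simp only: that(3))
    qed
    from this[OF sorted(1) ge1(1) len(1)] this[OF sorted(2) ge1(2) len(2)] show ?thesis
      by (rule trans[OF _ sym])
  next
    case False
    have "f (mono_of xs al) = 0" if "sorted_wrt (<) xs" "length xs = length al" for xs
    proof (rule mono_of_vanishes_above_degree[OF assms(1) _ that(2) pos])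
      show "distinct xs"
        using that(1) by (simp add: strict_sorted_iff)
    qed (use False in linarith)
    from this[OF sorted(1) len(1)] this[OF sorted(2) len(2)] show ?thesis
      by simp
  qed
qed

theorem lemma8p3:
  fixes f :: "(nat \<Rightarrow> nat) \<Rightarrow> int" and n :: nat
  assumes "inK f" and "series_degree f = n"
  shows "quasi_symmetric f \<longleftrightarrow> (\<forall>k. 1 \<le> k \<and> k \<le> n \<longrightarrow> subst_A (seq_k k) f = f)"
proof
  assume "quasi_symmetric f"
  then show "\<forall>k. 1 \<le> k \<and> k \<le> n \<longrightarrow> subst_A (seq_k k) f = f"
    using assms(1) quasi_symmetric_shift_mono subst_A_seq_k_eq_iff by blast
next
  assume "\<forall>k. 1 \<le> k \<and> k \<le> n \<longrightarrow> subst_A (seq_k k) f = f"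
  then have "f (shift_mono k m) = f m" if "1 \<le> k" "k \<le> n" "valid_mono m" for k m
    using assms(1) subst_A_seq_k_eq_iff that by blast
  then show "quasi_symmetric f"
    using quasi_symmetric_if_shift_invariant assms by blast
qed

end
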